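(* For each lattice $l$ and $t\in\mathbb{R}$ let $\Phi^l_t:X^l\to X^l$, $\Phi^l_t(q,v)=\big(q+[\,2t(d_ev_e)_{e\in l}\,],\,v\big)$, be the Hamiltonian flow of $H_l(q,v)=\sum_{e\in l}d_e\|v_e\|^2$. Then for every $t\in\mathbb{R}$ there is a well-defined map $\tau_t:A_0^\infty\to A_0^\infty$ such that $$\tau_t(f\circ\gamma_l)=(f\circ\Phi^l_t)\circ\gamma_l\qquad\text{for all } l\in\mathcal{L},\ f\in A_0^l;$$ in particular the C*-algebra $A_0^\infty$ is conserved by this time evolution.
   Context: Fix integers $n,D\ge1$. $G=\mathbb{T}^n=\mathbb{R}^n/\mathbb{Z}^n$; for a finite set $S$ and $x\in(\mathbb{R}^n)^S$, $[x]\in G^S$ is its class mod $(\mathbb{Z}^n)^S$. $B:=\{x\in\mathbb{R}^n:\|x\|<1/2\}$; $\cdot$ is the standard dot product. Lattices. A lattice is a finite set $l\subseteq\mathbb{R}^D\times\mathbb{R}^D$ of edges $e=(x,y)$ with $x<y$ lexicographically, distinct edges meeting at most at endpoints; $d_e=\|y-x\|$. $l\le m$ means every $e=(x_1,x_2)\in l$ is subdivided in $m$: there are $N\ge0$, $0<t_1<\dots<t_N<1$ with $y_0=x_1$, $y_s=(1-t_s)x_1+t_sx_2$, $y_{N+1}=x_2$, and all pieces $e_s=(y_{s-1},y_s)\in m$. $\mathcal{L}$ = set of lattices, directed by $\le$. Maps. For $l\le m$: $\gamma^{\mathrm{conf}}_{lm}(q)_e=\sum_s q_{e_s}$ ($G^m\to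 G^l$), $\gamma^{\mathrm{mom}}_{lm}(v)_e=\sum_s\frac{d_{e_s}}{d_e}v_{e_s}$, $\gamma_{lm}=(\gamma^{\mathrm{conf}}_{lm},\gamma^{\mathrm{mom}}_{lm}):X^m\to X^l$ where $X^l:=G^l\times(\mathbb{R}^n)^l$; $X^\infty=\varprojlim X^l$ with projections $\gamma_l:X^\infty\to X^l$. Algebras. $\mathcal{A}_0^l$ is the span of the functions $([x],v)\mapsto e^{2\pi ib\cdot x}e^{i\xi\cdot v}g(P_Vv)$ on $X^l$ ($b\in(\mathbb{Z}^n)^l$, $\xi\in(\mathbb{R}^n)^l$, $V$ a linear subspace of $(\mathbb{R}^n)^l$ with orthogonal projection $P_V$, $g\in\mathcal{S}(V)$ with compactly supported smooth Fourier transform); $A_0^l$ is its closure in the sup norm. $\mathcal{A}_0^\infty:=\{f\circ\gamma_l:l\in\mathcal{L},f\in\mathcal{A}_0^l\}\subseteq C_b(X^\infty)$ and $A_0^\infty$ is its sup-norm closure (which contains $f\circ\gamma_l$ for all $f\in A_0^l$). *)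

theory Defs
  imports "HOL-Analysis.Analysis" "HOL-Probability.Probability"
begin

(* Points of R^D are  real^'d  (with a linear order on the coordinate type 'd used for the
   lexicographic order); R^n is  real^'n.  Edges are pairs of points. *)
type_synonym 'd edge = "(real^'d) \<times> (real^'d)"
(* A state (q,v) in X^l: q e is the canonical representative in [0,1)^n of the torus class,
   v e the momentum; both are 0 on edges outside l. *)
type_synonym ('d,'n) state = "('d edge \<Rightarrow> real^'n) \<times> ('d edge \<Rightarrow> real^'n)"
type_synonym ('d,'n) xinf = "'d edge set \<Rightarrow> ('d,'n) state"

definition lexless :: "(real,'d::{finite,linorder}) vec \<Rightarrow> (real,'d) vec \<Rightarrow> bool" where
  "lexless x y \<longleftrightarrow> (\<exists>i. x$i < y$i \<and> (\<forall>j<i. x$j = y$j))"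

definition dlen :: "'d::finite edge \<Rightarrow> real" where
  "dlen e = norm (snd e - fst e)"

definition lattice :: "'d::{finite,linorder} edge set \<Rightarrow> bool" where
  "lattice l \<longleftrightarrow> finite l \<and> (\<forall>e\<in>l. lexless (fst e) (snd e)) \<and>
     (\<forall>e\<in>l. \<forall>e'\<in>l. e \<noteq> e' \<longrightarrow>
        closed_segment (fst e) (snd e) \<inter> closed_segment (fst e') (snd e')
          \<subseteq> {fst e, snd e} \<inter> {fst e', snd e'})"

definition subpt :: "'d::finite edge \<Rightarrow> (nat \<Rightarrow> real) \<Rightarrow> nat \<Rightarrow> real^'d" where
  "subpt e t s = (1 - t s) *\<^sub>R fst e + t s *\<^sub>R snd e"

definition subdiv :: "'d::finite edge set \<Rightarrow> 'd edge \<Rightarrow> nat \<Rightarrow> (nat \<Rightarrow> real) \<Rightarrow> bool" where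
  "subdiv m e N t \<longleftrightarrow> t 0 = 0 \<and> t (Suc N) = 1 \<and> (\<forall>s\<le>N. t s < t (Suc s)) \<and>
     (\<forall>s\<le>N. (subpt e t s, subpt e t (Suc s)) \<in> m)"

definition refines :: "'d::finite edge set \<Rightarrow> 'd edge set \<Rightarrow> bool" where
  "refines l m \<longleftrightarrow> (\<forall>e\<in>l. \<exists>N t. subdiv m e N t)"

definition pieces :: "'d::finite edge set \<Rightarrow> 'd edge \<Rightarrow> 'd edge set" where
  "pieces m e = (SOME P. \<exists>N t. subdiv m e N t \<and>
                    P = {(subpt e t s, subpt e t (Suc s)) | s. s \<le> N})"

(* canonical representative of the class [x] in T^n *)
definition torproj :: "(real,'n::finite) vec \<Rightarrow> (real,'n) vec" where
  "torproj x = (\<chi> i. frac (x$i))"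

definition Xl :: "'d::finite edge set \<Rightarrow> ('d,'n::finite) state set" where
  "Xl l = {(q,v). (\<forall>e. torproj (q e) = q e) \<and> (\<forall>e. e \<notin> l \<longrightarrow> q e = 0 \<and> v e = 0)}"

definition gam :: "'d::finite edge set \<Rightarrow> 'd edge set \<Rightarrow> ('d,'n::finite) state \<Rightarrow> ('d,'n) state" where
  "gam l m x = (case x of (q,v) \<Rightarrow>
      ((\<lambda>e. if e \<in> l then torproj (\<Sum>e'\<in>pieces m e. q e') else 0),
       (\<lambda>e. if e \<in> l then (\<Sum>e'\<in>pieces m e. (dlen e' / dlen e) *\<^sub>R v e') else 0)))"

(* the inverse limit X^\<infinity>: compatible families indexed by lattices (trivial value elsewhere) *)
definition Xinf :: "('d::{finite,linorder},'n::finite) xinf set" where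
  "Xinf = {x. (\<forall>l. lattice l \<longrightarrow> x l \<in> Xl l) \<and>
              (\<forall>l. \<not> lattice l \<longrightarrow> x l = ((\<lambda>_. 0), (\<lambda>_. 0))) \<and>
              (\<forall>l m. lattice l \<and> lattice m \<and> refines l m \<longrightarrow> gam l m (x m) = x l)}"

(* f \<circ> \<gamma>_l, as a function on X^\<infinity> (extended by 0) *)
definition lift :: "'d::{finite,linorder} edge set \<Rightarrow> (('d,'n::finite) state \<Rightarrow> complex)
                    \<Rightarrow> ('d,'n) xinf \<Rightarrow> complex" where
  "lift l f = (\<lambda>x. if x \<in> Xinf then f (x l) else 0)"

definition Phi :: "'d::finite edge set \<Rightarrow> real \<Rightarrow> ('d,'n::finite) state \<Rightarrow> ('d,'n) state" where
  "Phi l t x = (case x of (q,v) \<Rightarrow>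
      ((\<lambda>e. if e \<in> l then torproj (q e + (2 * t * dlen e) *\<^sub>R v e) else 0), v))"

definition Rk :: "nat \<Rightarrow> (nat \<Rightarrow> real) set" where
  "Rk k = {s. \<forall>i\<ge>k. s i = 0}"

definition pd :: "nat \<Rightarrow> ((nat \<Rightarrow> real) \<Rightarrow> complex) \<Rightarrow> (nat \<Rightarrow> real) \<Rightarrow> complex" where
  "pd i F s = vector_derivative (\<lambda>h. F (s(i := s i + h))) (at 0)"

primrec iter_pd :: "nat list \<Rightarrow> ((nat \<Rightarrow> real) \<Rightarrow> complex) \<Rightarrow> (nat \<Rightarrow> real) \<Rightarrow> complex" where
  "iter_pd [] F = F"
| "iter_pd (i # is) F = pd i (iter_pd is F)"

definition smooth_Rk :: "nat \<Rightarrow> ((nat \<Rightarrow> real) \<Rightarrow> complex) \<Rightarrow> bool" where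
  "smooth_Rk k F \<longleftrightarrow> (\<forall>is. set is \<subseteq> {..<k} \<longrightarrow>
      continuous_on (Rk k) (iter_pd is F) \<and>
      (\<forall>i<k. \<forall>s\<in>Rk k. (\<lambda>h::real. iter_pd is F (s(i := s i + h))) differentiable (at 0)))"

definition csupp_Rk :: "nat \<Rightarrow> ((nat \<Rightarrow> real) \<Rightarrow> complex) \<Rightarrow> bool" where
  "csupp_Rk k F \<longleftrightarrow> (\<exists>R. \<forall>s\<in>Rk k. F s \<noteq> 0 \<longrightarrow> (\<Sum>i<k. (s i)\<^sup>2) \<le> R)"

definition schwartz_Rk :: "nat \<Rightarrow> ((nat \<Rightarrow> real) \<Rightarrow> complex) \<Rightarrow> bool" where
  "schwartz_Rk k g \<longleftrightarrow> smooth_Rk k g \<and>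
     (\<forall>\<alpha> (\<beta>::nat \<Rightarrow> nat). set \<alpha> \<subseteq> {..<k} \<longrightarrow>
        (\<exists>C. \<forall>s\<in>Rk k. \<bar>\<Prod>i<k. (s i) ^ (\<beta> i)\<bar> * cmod (iter_pd \<alpha> g s) \<le> C))"

definition ext0 :: "nat \<Rightarrow> (nat \<Rightarrow> real) \<Rightarrow> (nat \<Rightarrow> real)" where
  "ext0 k x = (\<lambda>i. if i < k then x i else 0)"

definition lebk :: "nat \<Rightarrow> (nat \<Rightarrow> real) measure" where
  "lebk k = PiM {..<k} (\<lambda>_. lborel)"

definition fourier_Rk :: "nat \<Rightarrow> ((nat \<Rightarrow> real) \<Rightarrow> complex) \<Rightarrow> (nat \<Rightarrow> real) \<Rightarrow> complex" where
  "fourier_Rk k g \<xi> = integral\<^sup>L (lebk k) (\<lambda>x. g (ext0 k x) * cis (- (\<Sum>i<k. x i * \<xi> i)))"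

definition admissible :: "nat \<Rightarrow> ((nat \<Rightarrow> real) \<Rightarrow> complex) \<Rightarrow> bool" where
  "admissible k g \<longleftrightarrow> schwartz_Rk k g \<and> integrable (lebk k) (\<lambda>x. g (ext0 k x)) \<and>
     smooth_Rk k (fourier_Rk k g) \<and> csupp_Rk k (fourier_Rk k g)"

definition ipl :: "'d edge set \<Rightarrow> ('d edge \<Rightarrow> (real,'n::finite) vec) \<Rightarrow> ('d edge \<Rightarrow> real^'n) \<Rightarrow> real" where
  "ipl l a b = (\<Sum>e\<in>l. a e \<bullet> b e)"

definition onfam :: "'d edge set \<Rightarrow> nat \<Rightarrow> (nat \<Rightarrow> 'd edge \<Rightarrow> (real,'n::finite) vec) \<Rightarrow> bool" where
  "onfam l k B \<longleftrightarrow> (\<forall>j<k. \<forall>e. e \<notin> l \<longrightarrow> B j e = 0) \<and>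
     (\<forall>i<k. \<forall>j<k. ipl l (B i) (B j) = (if i = j then 1 else 0))"

(* generators ([x],v) \<mapsto> e^{2\<pi>i b.x} e^{i \<xi>.v} g(P_V v), with g read in the orthonormal
   coordinates of V, so that g(P_V v) = g(<v,B_0>,...,<v,B_(k-1)>) *)
definition gens :: "'d::finite edge set \<Rightarrow> (('d,'n::finite) state \<Rightarrow> complex) set" where
  "gens l = {(\<lambda>x. if x \<in> Xl l then (case x of (q,v) \<Rightarrow>
                cis (2 * pi * ipl l b q) * cis (ipl l \<xi> v) *
                g (\<lambda>j. if j < k then ipl l v (B j) else 0)) else 0)
             | b \<xi> k B g. (\<forall>e i. b e $ i \<in> \<int>) \<and> onfam l k B \<and> admissible k g}"

definition spanC :: "('a \<Rightarrow> complex) set \<Rightarrow> ('a \<Rightarrow> complex) set" where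
  "spanC F = {(\<lambda>x. \<Sum>i<N. c i * h i x) | (N::nat) c h. \<forall>i<N. h i \<in> F}"

definition A0span :: "'d::finite edge set \<Rightarrow> (('d,'n::finite) state \<Rightarrow> complex) set" where
  "A0span l = spanC (gens l)"

definition A0l :: "'d::finite edge set \<Rightarrow> (('d,'n::finite) state \<Rightarrow> complex) set" where
  "A0l l = {f. (\<forall>x. x \<notin> Xl l \<longrightarrow> f x = 0) \<and>
     (\<forall>\<epsilon>>0. \<exists>h\<in>A0span l. \<forall>x\<in>Xl l. cmod (f x - h x) \<le> \<epsilon>)}"

definition A0inf :: "(('d::{finite,linorder},'n::finite) xinf \<Rightarrow> complex) set" where
  "A0inf = {F. (\<forall>x. x \<notin> Xinf \<longrightarrow> F x = 0) \<and>
     (\<forall>\<epsilon>>0. \<exists>l h. lattice l \<and> h \<in> A0span l \<and>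
                  (\<forall>x\<in>Xinf. cmod (F x - lift l h x) \<le> \<epsilon>))}"

end

theory Submission
  imports Defs
begin

text \<open>On an edge \<open>e\<close> of \<open>l\<close> the flow moves \<open>q\<^sub>e\<close> by \<open>2t d\<^sub>e v\<^sub>e\<close>, and \<open>d\<^sub>e v\<^sub>e\<close> is the sum
  of \<open>d\<^sub>e\<^sub>' v\<^sub>e\<^sub>'\<close> over the pieces \<open>e'\<close> of \<open>e\<close>; hence the flows commute with the projections
  \<open>\<gamma>\<^sub>l\<^sub>m\<close> and define a flow \<open>\<Phi>\<^sup>\<infinity>\<^sub>t\<close> on \<open>X\<^sup>\<infinity>\<close>, and \<open>\<tau>\<^sub>t F = F \<circ> \<Phi>\<^sup>\<infinity>\<^sub>t\<close>. Composing the generator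
  \<open>e\<^bsup>2\<pi>ib\<cdot>x\<^esup>e\<^bsup>i\<xi>\<cdot>v\<^esup>g(P\<^sub>Vv)\<close> with \<open>\<Phi>\<^sup>l\<^sub>t\<close> gives the generator with \<open>\<xi>\<^sub>e\<close> replaced by
  \<open>\<xi>\<^sub>e + 4\<pi>t d\<^sub>e b\<^sub>e\<close> (the integrality of \<open>b\<close> makes the torus projection invisible), so
  \<open>\<A>\<^sub>0\<^sup>l\<close> is preserved; composition with a self-map of \<open>X\<^sup>\<infinity>\<close> does not increase
  sup-distances, so the closure \<open>A\<^sub>0\<^sup>\<infinity>\<close> is preserved as well.\<close>

lemma torproj_add_torproj: "torproj (x + torproj y) = torproj (x + y)"
  by (simp add: torproj_def vec_eq_iff)

lemma torproj_torproj_add: "torproj (torproj x + y) = torproj (x + y)"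
  by (metis add.commute torproj_add_torproj)

lemma torproj_torproj [simp]: "torproj (torproj y) = torproj y"
  by (simp add: torproj_def vec_eq_iff)

lemma torproj_0 [simp]: "torproj 0 = 0"
  by (simp add: torproj_def vec_eq_iff)

lemma torproj_sum_torproj: "torproj (\<Sum>i\<in>A. torproj (f i)) = torproj (\<Sum>i\<in>A. f i)"
proof (induction A rule: infinite_finite_induct)
  case (insert x F)
  have "torproj (\<Sum>i\<in>insert x F. torproj (f i)) = torproj (f x + torproj (\<Sum>i\<in>F. torproj (f i)))"
    using insert.hyps by (simp add: torproj_torproj_add torproj_add_torproj)
  also have "\<dots> = torproj (f x + torproj (\<Sum>i\<in>F. f i))"
    by (simp only: insert.IH)
  also have "\<dots> = torproj (\<Sum>i\<in>insert x F. f i)"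
    using insert by (simp add: torproj_add_torproj)
  finally show ?case .
qed auto

lemma inner_torproj_diff_Ints:
  assumes "\<forall>i. b $ i \<in> \<int>"
  shows "b \<bullet> torproj z - b \<bullet> z \<in> \<int>"
proof -
  have "b \<bullet> torproj z - b \<bullet> z = (\<Sum>i\<in>UNIV. - (b$i * of_int \<lfloor>z$i\<rfloor>))"
    by (simp add: inner_vec_def torproj_def frac_def sum_subtractf sum_negf algebra_simps)
  also have "\<dots> \<in> \<int>"
    using assms by (intro Ints_sum Ints_minus Ints_mult) auto
  finally show ?thesis .
qed

lemma cis_ipl_torproj:
  assumes "\<forall>e i. b e $ i \<in> \<int>"
  shows "cis (2 * pi * ipl l b (\<lambda>e. if e \<in> l then torproj (z e) else 0)) = cis (2 * pi * ipl l b z)"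
proof -
  define k where "k = (\<Sum>e\<in>l. b e \<bullet> torproj (z e) - b e \<bullet> z e)"
  have "k \<in> \<int>"
    unfolding k_def using assms by (intro Ints_sum inner_torproj_diff_Ints) auto
  moreover have "2 * pi * ipl l b (\<lambda>e. if e \<in> l then torproj (z e) else 0) = 2 * pi * ipl l b z + 2 * pi * k"
    by (simp add: k_def ipl_def sum_subtractf algebra_simps)
  ultimately show ?thesis
    by (simp flip: cis_mult)
qed

lemma dlen_pos: "lattice l \<Longrightarrow> e \<in> l \<Longrightarrow> dlen e > 0"
proof -
  assume "lattice l" "e \<in> l"
  then obtain i where "fst e $ i < snd e $ i"
    unfolding lattice_def lexless_def by blast
  then have "snd e \<noteq> fst e" by auto
  then show ?thesis by (simp add: dlen_def)
qed

lemma Phi_in_Xl: "y \<in> Xl l \<Longrightarrow> Phi l t y \<in> Xl l"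
  by (auto simp: Xl_def Phi_def split: prod.splits)

lemma Phi_on_Xl:
  "(q, v) \<in> Xl l \<Longrightarrow> Phi l t (q, v) = ((\<lambda>e. torproj (q e + (2 * t * dlen e) *\<^sub>R v e)), v)"
  by (auto simp: Xl_def Phi_def fun_eq_iff)

lemma gam_Phi:
  assumes "lattice l" "y \<in> Xl m"
  shows "gam l m (Phi m t y) = Phi l t (gam l m y)"
proof -
  obtain q v where y: "y = (q, v)" by fastforce
  have Phi_y: "Phi m t y = ((\<lambda>e. torproj (q e + (2 * t * dlen e) *\<^sub>R v e)), v)"
    using assms(2) by (simp add: y Phi_on_Xl)
  have "torproj (\<Sum>e'\<in>pieces m e. torproj (q e' + (2 * t * dlen e') *\<^sub>R v e')) =
        torproj (torproj (\<Sum>e'\<in>pieces m e. q e') +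
                 (2 * t * dlen e) *\<^sub>R (\<Sum>e'\<in>pieces m e. (dlen e' / dlen e) *\<^sub>R v e'))"
    if "e \<in> l" for e
  proof -
    have "dlen e \<noteq> 0" using dlen_pos[OF assms(1) that] by simp
    then have "(2 * t * dlen e) *\<^sub>R (\<Sum>e'\<in>pieces m e. (dlen e' / dlen e) *\<^sub>R v e')
             = (\<Sum>e'\<in>pieces m e. (2 * t * dlen e') *\<^sub>R v e')"
      by (simp add: scaleR_sum_right mult.assoc)
    then show ?thesis
      by (simp add: torproj_sum_torproj torproj_torproj_add sum.distrib)
  qed
  then show ?thesis
    unfolding Phi_y by (simp add: y gam_def Phi_def fun_eq_iff)
qed

lemma Xinf_component: "x \<in> Xinf \<Longrightarrow> lattice l \<Longrightarrow> x l \<in> Xl l"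
  by (simp add: Xinf_def)

definition PhiInf :: "real \<Rightarrow> ('d::{finite,linorder},'n::finite) xinf \<Rightarrow> ('d,'n) xinf" where
  "PhiInf t x = (\<lambda>l. if lattice l then Phi l t (x l) else ((\<lambda>_. 0), (\<lambda>_. 0)))"

lemma PhiInf_lattice [simp]: "lattice l \<Longrightarrow> PhiInf t x l = Phi l t (x l)"
  by (simp add: PhiInf_def)

lemma PhiInf_in_Xinf:
  assumes "x \<in> Xinf"
  shows "PhiInf t x \<in> Xinf"
proof -
  have compat: "\<And>l m. lattice l \<Longrightarrow> lattice m \<Longrightarrow> refines l m \<Longrightarrow> gam l m (x m) = x l"
    using assms unfolding Xinf_def by auto
  have "gam l m (Phi m t (x m)) = Phi l t (x l)" if "lattice l" "lattice m" "refines l m" for l m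
    using gam_Phi[OF that(1) Xinf_component[OF assms that(2)]] compat[OF that] by simp
  moreover have "Phi l t (x l) \<in> Xl l" if "lattice l" for l
    using Phi_in_Xl Xinf_component[OF assms that] by blast
  ultimately show ?thesis
    unfolding Xinf_def PhiInf_def by auto
qed

lemma ipl_add_scaleR_right:
  "ipl l b (\<lambda>e. q e + c e *\<^sub>R v e) = ipl l b q + ipl l (\<lambda>e. c e *\<^sub>R b e) v"
  by (simp add: ipl_def inner_add_right sum.distrib inner_commute)

lemma gens_comp_Phi:
  assumes "h \<in> gens l"
  shows "\<exists>h'\<in>gens l. \<forall>y\<in>Xl l. h' y = h (Phi l t y)"
proof -
  obtain b \<xi> k B g where h: "h = (\<lambda>x. if x \<in> Xl l then (case x of (q, v) \<Rightarrow>
                cis (2 * pi * ipl l b q) * cis (ipl l \<xi> v) *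
                g (\<lambda>j. if j < k then ipl l v (B j) else 0)) else 0)"
    and b: "\<forall>e i. b e $ i \<in> \<int>" and B: "onfam l k B" and g: "admissible k g"
    using assms unfolding gens_def by blast
  define \<xi>' where "\<xi>' = (\<lambda>e. \<xi> e + (2 * pi * (2 * t * dlen e)) *\<^sub>R b e)"
  define h' where "h' = (\<lambda>x. if x \<in> Xl l then (case x of (q, v) \<Rightarrow>
                cis (2 * pi * ipl l b q) * cis (ipl l \<xi>' v) *
                g (\<lambda>j. if j < k then ipl l v (B j) else 0)) else 0)"
  have "h' \<in> gens l"
    unfolding gens_def h'_def using b B g by blast
  moreover have "h' (q, v) = h (Phi l t (q, v))" if qv: "(q, v) \<in> Xl l" for q v
  proof -
    define S where "S = ipl l (\<lambda>e. (2 * t * dlen e) *\<^sub>R b e) v"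
    have "ipl l \<xi>' v = ipl l \<xi> v + 2 * pi * S"
      by (simp add: \<xi>'_def S_def ipl_def inner_add_left sum.distrib sum_distrib_left mult.assoc)
    moreover have "cis (2 * pi * ipl l b (\<lambda>e. if e \<in> l then torproj (q e + (2 * t * dlen e) *\<^sub>R v e) else 0))
          = cis (2 * pi * ipl l b q + 2 * pi * S)"
      using cis_ipl_torproj[OF b, of l "\<lambda>e. q e + (2 * t * dlen e) *\<^sub>R v e"]
      by (simp add: ipl_add_scaleR_right S_def distrib_left)
    ultimately have "cis (2 * pi * ipl l b (\<lambda>e. if e \<in> l then torproj (q e + (2 * t * dlen e) *\<^sub>R v e) else 0))
            * cis (ipl l \<xi> v)
          = cis (2 * pi * ipl l b q) * cis (ipl l \<xi>' v)"
      by (simp add: cis_mult add_ac)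
    then show ?thesis
      using qv Phi_in_Xl[OF qv] by (simp add: h h'_def Phi_def mult.assoc)
  qed
  ultimately show ?thesis by (metis surj_pair)
qed

lemma A0span_comp_Phi:
  assumes "h \<in> A0span l"
  shows "\<exists>h'\<in>A0span l. \<forall>y\<in>Xl l. h' y = h (Phi l t y)"
proof -
  obtain N :: nat and c hs where h: "h = (\<lambda>x. \<Sum>i<N. c i * hs i x)" and hs: "\<forall>i<N. hs i \<in> gens l"
    using assms unfolding A0span_def spanC_def by blast
  have "\<forall>i. \<exists>g. i < N \<longrightarrow> g \<in> gens l \<and> (\<forall>y\<in>Xl l. g y = hs i (Phi l t y))"
    using gens_comp_Phi hs by blast
  then obtain G where G: "\<And>i. i < N \<Longrightarrow> G i \<in> gens l \<and> (\<forall>y\<in>Xl l. G i y = hs i (Phi l t y))"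
    by metis
  define h' where "h' = (\<lambda>x. \<Sum>i<N. c i * G i x)"
  have "h' \<in> A0span l"
    unfolding h'_def A0span_def spanC_def using G by blast
  moreover have "\<forall>y\<in>Xl l. h' y = h (Phi l t y)"
    unfolding h'_def h using G by simp
  ultimately show ?thesis by blast
qed

lemma lift_comp_PhiInf:
  assumes "lattice l" "x \<in> Xinf"
  shows "lift l f (PhiInf t x) = lift l (f \<circ> Phi l t) x"
  using assms PhiInf_in_Xinf[OF assms(2)] by (simp add: lift_def)

definition tau :: "real \<Rightarrow> (('d::{finite,linorder},'n::finite) xinf \<Rightarrow> complex) \<Rightarrow> ('d,'n) xinf \<Rightarrow> complex" where
  "tau t F x = (if x \<in> Xinf then F (PhiInf t x) else 0)"

lemma tau_lift: "lattice l \<Longrightarrow> tau t (lift l f) = lift l (f \<circ> Phi l t)"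
  by (auto simp: tau_def lift_comp_PhiInf fun_eq_iff lift_def[of l "f \<circ> Phi l t"])

lemma tau_A0inf:
  assumes F: "F \<in> A0inf"
  shows "tau t F \<in> A0inf"
  unfolding A0inf_def
proof (intro CollectI conjI allI impI)
  fix \<epsilon> :: real assume "\<epsilon> > 0"
  then obtain l h where l: "lattice l" and h: "h \<in> A0span l"
    and approx: "\<forall>x\<in>Xinf. cmod (F x - lift l h x) \<le> \<epsilon>"
    using F unfolding A0inf_def by blast
  obtain h' where h': "h' \<in> A0span l" "\<forall>y\<in>Xl l. h' y = h (Phi l t y)"
    using A0span_comp_Phi[OF h] by blast
  have "lift l h' x = lift l h (PhiInf t x)" if "x \<in> Xinf" for x
  proof -
    have "lift l h' x = lift l (h \<circ> Phi l t) x"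
      using h'(2) Xinf_component[OF that l] by (simp add: lift_def)
    also have "\<dots> = lift l h (PhiInf t x)"
      by (rule lift_comp_PhiInf[OF l that, symmetric])
    finally show ?thesis .
  qed
  then have "\<forall>x\<in>Xinf. cmod (tau t F x - lift l h' x) \<le> \<epsilon>"
    by (simp add: tau_def approx PhiInf_in_Xinf)
  then show "\<exists>l h. lattice l \<and> h \<in> A0span l \<and> (\<forall>x\<in>Xinf. cmod (tau t F x - lift l h x) \<le> \<epsilon>)"
    using l h'(1) by blast
qed (simp add: tau_def)

theorem mainTheorem4:
  fixes t :: real
  shows "\<exists>\<tau> :: (('d::{finite,linorder},'n::finite) xinf \<Rightarrow> complex) \<Rightarrow> (('d,'n) xinf \<Rightarrow> complex).
           (\<forall>F\<in>A0inf. \<tau> F \<in> A0inf) \<and>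
           (\<forall>l (f :: ('d,'n) state \<Rightarrow> complex). lattice l \<and> f \<in> A0l l \<longrightarrow>
               \<tau> (lift l f) = lift l (f \<circ> Phi l t))"
  using tau_A0inf tau_lift by blast

end
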